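(* Let $(E,\mathscr{T},\le)$ be a $T_2$-preordered Tychonoff space such that, with $\mathcal{F}$ the family of continuous isotone functions $f:E\to[0,1]$, $G(\le)=\bigcap_{f\in\mathcal{F}}G_f$. Let $\beta:E\to\beta E$ be the Stone–Čech compactification with topology $\mathscr{T}_\beta$ and let $\le_\beta$ be the preorder on $\beta E$ with $G(\le_\beta)=\bigcap_{f\in\mathcal{F}}G_{\tilde f}$, where $\tilde f:\beta E\to[0,1]$ is the unique continuous extension of $f\circ\beta^{-1}$. Then $\le_\beta$ is the smallest closed preorder on $(\beta E,\mathscr{T}_\beta)$ inducing $\le$ on $E$; that is, if $R$ is the graph of any closed preorder on $\beta E$ with $(\beta\times\beta)^{-1}(R)=G(\le)$, then $G(\le_\beta)\subseteq R$.
   Context: $T_2$-preordered: the graph $G(\le)=\{(x,y):x\le y\}$ of the preorder is closed in $E\times E$. Isotone: $x\le y\Rightarrow f(x)\le f(y)$. $G_f=\{(x,y):f(x)\le f(y)\}$. A preorder is closed if its graph is closed in the product topology. *)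

theory Defs
  imports "HOL-Analysis.Analysis"
begin

definition pgraph :: "'a topology \<Rightarrow> ('a \<Rightarrow> 'a \<Rightarrow> bool) \<Rightarrow> ('a \<times> 'a) set" where
  "pgraph X le = {(x, y). x \<in> topspace X \<and> y \<in> topspace X \<and> le x y}"

definition iso_cont_01 :: "'a topology \<Rightarrow> ('a \<Rightarrow> 'a \<Rightarrow> bool) \<Rightarrow> ('a \<Rightarrow> real) set" where
  "iso_cont_01 X le = {f. continuous_map X (top_of_set {0..1}) f \<and>
      (\<forall>x\<in>topspace X. \<forall>y\<in>topspace X. le x y \<longrightarrow> f x \<le> f y)}"

definition Gf :: "'a topology \<Rightarrow> ('a \<Rightarrow> real) \<Rightarrow> ('a \<times> 'a) set" where
  "Gf X f = {(x, y). x \<in> topspace X \<and> y \<in> topspace X \<and> f x \<le> f y}"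

definition stone_cech :: "'a topology \<Rightarrow> 'b topology \<Rightarrow> ('a \<Rightarrow> 'b) \<Rightarrow> bool" where
  "stone_cech X Y b \<longleftrightarrow> compact_space Y \<and> Hausdorff_space Y \<and> embedding_map X Y b \<and>
     Y closure_of (b ` topspace X) = topspace Y \<and>
     (\<forall>g. continuous_map X (top_of_set {0..1}) g \<longrightarrow>
        (\<exists>!h. continuous_map Y (top_of_set {0..(1::real)}) h \<and>
             (\<forall>x\<in>topspace X. h (b x) = g x) \<and> (\<forall>y. y \<notin> topspace Y \<longrightarrow> h y = 0)))"

text \<open>The unique continuous extension of f o b^{-1} (normalised to 0 off the carrier).\<close>
definition sc_ext :: "'a topology \<Rightarrow> 'b topology \<Rightarrow> ('a \<Rightarrow> 'b) \<Rightarrow> ('a \<Rightarrow> real) \<Rightarrow> 'b \<Rightarrow> real" where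
  "sc_ext X Y b f = (THE h. continuous_map Y (top_of_set {0..1}) h \<and>
      (\<forall>x\<in>topspace X. h (b x) = f x) \<and> (\<forall>y. y \<notin> topspace Y \<longrightarrow> h y = 0))"

definition beta_graph :: "'a topology \<Rightarrow> ('a \<Rightarrow> 'a \<Rightarrow> bool) \<Rightarrow> 'b topology \<Rightarrow> ('a \<Rightarrow> 'b) \<Rightarrow> ('b \<times> 'b) set" where
  "beta_graph X le Y b = topspace Y \<times> topspace Y \<inter> (\<Inter>f\<in>iso_cont_01 X le. Gf Y (sc_ext X Y b f))"

end

theory Submission
  imports Defs
begin

text \<open>The extensions of the continuous isotone maps to \<open>\<beta>E\<close> cut out a closed preorder whose trace on
  \<open>E\<close> is \<open>\<le>\<close>, by the separation hypothesis. Minimality is Nachbin's separation theorem: if \<open>R\<close> is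
  a closed preorder on a compact Hausdorff space and \<open>(p, q) \<notin> R\<close>, some continuous \<open>R\<close>-monotone
  \<open>g\<close> into \<open>[0,1]\<close> has \<open>g p = 1\<close> and \<open>g q = 0\<close>. Then \<open>g \<circ> \<beta>\<close> is continuous and isotone on \<open>E\<close> and
  its extension is \<open>g\<close>, so \<open>(p, q) \<notin> G(\<le>\<^sub>\<beta>)\<close>. Nachbin's function is Urysohn's construction
  applied to a dyadic chain of open sets that are in addition decreasing for \<open>R\<close>; the chain can be
  refined because the decreasing hull \<open>R\<inverse> `` K\<close> of a closed set is again closed, by compactness.\<close>

lemma dyadic_between:
  fixes a c :: real
  assumes "0 \<le> a" "a < c"
  obtains d where "d \<in> dyadics" "a < d" "d < c"
proof -
  have "closure ({a<..<c} \<inter> (\<Union>k m. {of_nat m / 2^k})) = closure {a<..<c}"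
    using assms by (intro closure_dyadic_rationals_in_convex_set_pos_1) auto
  then have "{a<..<c} \<inter> dyadics \<noteq> {}"
    using assms by (auto simp: dyadics_def)
  then show thesis
    using that by auto
qed

definition dyadic_urysohn_fun :: "(real \<Rightarrow> 'a set) \<Rightarrow> 'a \<Rightarrow> real" where
  "dyadic_urysohn_fun G x = Inf (insert 1 {r \<in> dyadics \<inter> {0..1}. x \<in> G r})"

lemma bdd_below_dyadic_urysohn_set: "bdd_below (insert (1::real) {r \<in> dyadics \<inter> {0..1}. x \<in> G r})"
  by (rule bdd_belowI[of _ 0]) auto

lemma dyadic_urysohn_fun_nonneg: "0 \<le> dyadic_urysohn_fun G x"
  unfolding dyadic_urysohn_fun_def by (rule cInf_greatest) auto

lemma dyadic_urysohn_fun_le: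
  "r \<in> insert 1 {r \<in> dyadics \<inter> {0..1}. x \<in> G r} \<Longrightarrow> dyadic_urysohn_fun G x \<le> r"
  unfolding dyadic_urysohn_fun_def by (rule cInf_lower[OF _ bdd_below_dyadic_urysohn_set])

lemma dyadic_urysohn_fun_le_1: "dyadic_urysohn_fun G x \<le> 1"
  by (rule dyadic_urysohn_fun_le) simp

lemma dyadic_urysohn_fun_mono:
  assumes "\<And>r. \<lbrakk>r \<in> dyadics \<inter> {0..1}; y \<in> G r\<rbrakk> \<Longrightarrow> x \<in> G r"
  shows "dyadic_urysohn_fun G x \<le> dyadic_urysohn_fun G y"
  unfolding dyadic_urysohn_fun_def
  by (rule cInf_superset_mono) (use assms bdd_below_dyadic_urysohn_set in auto)

context
  fixes X :: "'a topology" and G :: "real \<Rightarrow> 'a set"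
  assumes open_chain: "\<And>r. r \<in> dyadics \<inter> {0..1} \<Longrightarrow> openin X (G r)"
    and closure_chain: "\<And>r s. \<lbrakk>r \<in> dyadics \<inter> {0..1}; s \<in> dyadics \<inter> {0..1}; r < s\<rbrakk>
                          \<Longrightarrow> X closure_of G r \<subseteq> G s"
begin

lemma dyadic_urysohn_fun_ge:
  assumes r: "r \<in> dyadics \<inter> {0..1}" and "x \<notin> G r"
  shows "r \<le> dyadic_urysohn_fun G x"
  unfolding dyadic_urysohn_fun_def
proof (rule cInf_greatest)
  fix s assume s: "s \<in> insert 1 {s \<in> dyadics \<inter> {0..1}. x \<in> G s}"
  show "r \<le> s"
  proof (rule ccontr)
    assume "\<not> r \<le> s"
    with r s have "s \<in> dyadics \<inter> {0..1}" "s < r" "x \<in> G s"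
      by auto
    moreover have "G s \<subseteq> X closure_of G s"
      using open_chain[OF \<open>s \<in> dyadics \<inter> {0..1}\<close>] by (simp add: closure_of_subset openin_subset)
    ultimately show False
      using closure_chain r \<open>x \<notin> G r\<close> by blast
  qed
qed auto

lemma dyadic_urysohn_fun_less_iff:
  assumes "a \<le> 1"
  shows "dyadic_urysohn_fun G x < a \<longleftrightarrow> (\<exists>r \<in> dyadics \<inter> {0..1}. r < a \<and> x \<in> G r)"
proof
  assume "dyadic_urysohn_fun G x < a"
  then have "\<exists>r \<in> insert 1 {r \<in> dyadics \<inter> {0..1}. x \<in> G r}. r < a"
    unfolding dyadic_urysohn_fun_def
    by (simp only: cInf_less_iff[OF insert_not_empty bdd_below_dyadic_urysohn_set])
  with assms show "\<exists>r \<in> dyadics \<inter> {0..1}. r < a \<and> x \<in> G r"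
    by auto
next
  assume "\<exists>r \<in> dyadics \<inter> {0..1}. r < a \<and> x \<in> G r"
  then obtain r where "r \<in> dyadics \<inter> {0..1}" "x \<in> G r" "r < a"
    by blast
  then show "dyadic_urysohn_fun G x < a"
    using dyadic_urysohn_fun_le[of r x G] by simp
qed

lemma dyadic_urysohn_fun_greater_iff:
  assumes "0 \<le> a"
  shows "a < dyadic_urysohn_fun G x \<longleftrightarrow> (\<exists>s \<in> dyadics \<inter> {0..1}. a < s \<and> x \<notin> X closure_of G s)"
proof
  assume "a < dyadic_urysohn_fun G x"
  then obtain s where s: "s \<in> dyadics" "a < s" "s < dyadic_urysohn_fun G x"
    by (rule dyadic_between[OF assms])
  have "0 \<le> s"
    using assms s(2) by simp
  then obtain s' where s': "s' \<in> dyadics" "s < s'" "s' < dyadic_urysohn_fun G x"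
    using s(3) by (rule dyadic_between)
  have "dyadic_urysohn_fun G x \<le> 1"
    by (rule dyadic_urysohn_fun_le_1)
  with assms s s' have D: "s \<in> dyadics \<inter> {0..1}" "s' \<in> dyadics \<inter> {0..1}"
    by auto
  have "x \<notin> G s'"
    using dyadic_urysohn_fun_le[of s' x G] D(2) s'(3) by auto
  then have "x \<notin> X closure_of G s"
    using closure_chain[OF D s'(2)] by blast
  with D(1) s(2) show "\<exists>s \<in> dyadics \<inter> {0..1}. a < s \<and> x \<notin> X closure_of G s"
    by blast
next
  assume "\<exists>s \<in> dyadics \<inter> {0..1}. a < s \<and> x \<notin> X closure_of G s"
  then obtain s where s: "s \<in> dyadics \<inter> {0..1}" "a < s" "x \<notin> X closure_of G s"
    by blast
  have "G s \<subseteq> X closure_of G s"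
    using open_chain[OF s(1)] by (simp add: closure_of_subset openin_subset)
  with s(3) have "x \<notin> G s"
    by blast
  then show "a < dyadic_urysohn_fun G x"
    using dyadic_urysohn_fun_ge[OF s(1)] s(2) by (meson order.strict_trans2)
qed

lemma continuous_map_dyadic_urysohn_fun:
  "continuous_map X (top_of_set {0..1}) (dyadic_urysohn_fun G)"
  unfolding continuous_map_upper_lower_semicontinuous_lt_gen
proof (intro conjI allI ballI)
  fix x show "dyadic_urysohn_fun G x \<in> {0..1}"
    using dyadic_urysohn_fun_nonneg[of G x] dyadic_urysohn_fun_le_1[of G x] by simp
next
  fix a :: real
  show "openin X {x \<in> topspace X. a < dyadic_urysohn_fun G x}"
  proof (cases "0 \<le> a")
    case True
    then have "{x \<in> topspace X. a < dyadic_urysohn_fun G x}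
             = (\<Union>s \<in> dyadics \<inter> {0..1} \<inter> {a<..}. topspace X - X closure_of G s)"
      using dyadic_urysohn_fun_greater_iff by auto
    moreover have "openin X (\<Union>s \<in> dyadics \<inter> {0..1} \<inter> {a<..}. topspace X - X closure_of G s)"
      by (rule openin_Union) auto
    ultimately show ?thesis
      by (simp only:)
  next
    case False
    then have "{x \<in> topspace X. a < dyadic_urysohn_fun G x} = topspace X"
      using dyadic_urysohn_fun_nonneg[of G] by (auto simp: not_le intro: less_le_trans)
    then show ?thesis
      by simp
  qed
  show "openin X {x \<in> topspace X. dyadic_urysohn_fun G x < a}"
  proof (cases "a \<le> 1")
    case True
    then have "{x \<in> topspace X. dyadic_urysohn_fun G x < a} = (\<Union>r \<in> dyadics \<inter> {0..1} \<inter> {..<a}. G r)"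
      using dyadic_urysohn_fun_less_iff open_chain openin_subset by fastforce
    moreover have "openin X (\<Union>r \<in> dyadics \<inter> {0..1} \<inter> {..<a}. G r)"
      using open_chain by (intro openin_Union) auto
    ultimately show ?thesis
      by (simp only:)
  next
    case False
    then have "{x \<in> topspace X. dyadic_urysohn_fun G x < a} = topspace X"
      using dyadic_urysohn_fun_le_1[of G] by (auto simp: not_le intro: le_less_trans)
    then show ?thesis
      by simp
  qed
qed

end

locale compact_preordered_space =
  fixes Y :: "'a topology" and R :: "'a rel"
  assumes compact: "compact_space Y" and Hausdorff: "Hausdorff_space Y"
    and preorder: "preorder_on (topspace Y) R"
    and closed: "closedin (prod_topology Y Y) R"
begin

lemma subset_topspace: "R \<subseteq> topspace Y \<times> topspace Y"
  and refl: "x \<in> topspace Y \<Longrightarrow> (x, x) \<in> R"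
  and trans: "\<lbrakk>(x, y) \<in> R; (y, z) \<in> R\<rbrakk> \<Longrightarrow> (x, z) \<in> R"
  using preorder by (auto simp: preorder_on_def refl_on_def dest: transD)

lemma converse: "compact_preordered_space Y (R\<inverse>)"
proof
  have "R\<inverse> = (\<lambda>(x, y). (y, x)) ` R"
    by force
  then show "closedin (prod_topology Y Y) (R\<inverse>)"
    using closed subset_topspace homeomorphic_map_closedness[OF homeomorphic_map_swap]
    by (metis topspace_prod_topology)
qed (use compact Hausdorff preorder in auto)

lemma closedin_Image:
  assumes "closedin Y K"
  shows "closedin Y (R `` K)"
proof -
  have "R `` K = snd ` (R \<inter> (K \<times> topspace Y))"
    using subset_topspace by force
  moreover have "compactin (prod_topology Y Y) (R \<inter> (K \<times> topspace Y))"
    using assms closed compact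
    by (intro closedin_compact_space)
       (simp_all add: compact_space_prod_topology closedin_Int closedin_prod_Times_iff)
  ultimately show ?thesis
    using Hausdorff compactin_imp_closedin continuous_map_snd image_compactin by metis
qed

lemma closedin_Image_converse: "closedin Y K \<Longrightarrow> closedin Y (R\<inverse> `` K)"
  using compact_preordered_space.closedin_Image[OF converse] .

lemma openin_Image_complement: "closedin Y C \<Longrightarrow> openin Y (topspace Y - R `` C)"
  using closedin_Image by blast

lemma decreasing_Image_complement: "R\<inverse> `` (topspace Y - R `` C) \<subseteq> topspace Y - R `` C"
  using subset_topspace trans by blast

lemma decreasing_open_between:
  assumes K: "closedin Y K" and U: "openin Y U" "R\<inverse> `` K \<subseteq> U"
  obtains V where "openin Y V" "R\<inverse> `` V \<subseteq> V" "K \<subseteq> V" "Y closure_of V \<subseteq> U"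
proof -
  have "normal_space Y"
    using compact Hausdorff compact_Hausdorff_or_regular_imp_normal_space by blast
  then obtain W where W: "openin Y W" "R\<inverse> `` K \<subseteq> W" "Y closure_of W \<subseteq> U"
    using closedin_Image_converse[OF K] U unfolding normal_space_alt by metis
  \<comment> \<open>the largest decreasing subset of \<open>W\<close>\<close>
  define V where "V = topspace Y - R `` (topspace Y - W)"
  have "openin Y V" "R\<inverse> `` V \<subseteq> V"
    unfolding V_def using W(1) openin_Image_complement decreasing_Image_complement by auto
  moreover have "K \<subseteq> V"
    using W(2) closedin_subset[OF K] unfolding V_def by blast
  moreover have "V \<subseteq> W"
    unfolding V_def using refl by blast
  then have "Y closure_of V \<subseteq> U"
    using W(3) closure_of_mono by blast
  ultimately show thesis
    using that by blast
qed

theorem monotone_Urysohn: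
  assumes p: "p \<in> topspace Y" and q: "q \<in> topspace Y" and pq: "(p, q) \<notin> R"
  obtains g :: "'a \<Rightarrow> real"
  where "continuous_map Y (top_of_set {0..1}) g" "\<And>x y. (x, y) \<in> R \<Longrightarrow> g x \<le> g y"
    "g p = 1" "g q = 0"
proof -
  define P where "P U V \<longleftrightarrow> openin Y U \<and> openin Y V \<and> R\<inverse> `` U \<subseteq> U \<and> R\<inverse> `` V \<subseteq> V
                            \<and> Y closure_of U \<subseteq> V" for U V
  define G1 where "G1 = topspace Y - R `` {p}"
  have G1: "openin Y G1" "R\<inverse> `` G1 \<subseteq> G1"
    unfolding G1_def using closedin_Hausdorff_singleton[OF Hausdorff p]
    by (simp_all add: openin_Image_complement decreasing_Image_complement)
  have "p \<notin> G1"
    unfolding G1_def using refl[OF p] by blast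
  have "R\<inverse> `` {q} \<subseteq> G1"
    unfolding G1_def using subset_topspace trans pq by blast
  then obtain G0 where G0: "openin Y G0" "R\<inverse> `` G0 \<subseteq> G0" "{q} \<subseteq> G0" "Y closure_of G0 \<subseteq> G1"
    by (rule decreasing_open_between[OF closedin_Hausdorff_singleton[OF Hausdorff q] G1(1)])
  have "\<exists>G :: real \<Rightarrow> 'a set. G 0 = G0 \<and> G 1 = G1 \<and>
          (\<forall>r \<in> dyadics \<inter> {0..1}. \<forall>s \<in> dyadics \<inter> {0..1}. r < s \<longrightarrow> P (G r) (G s))"
  proof (rule recursion_on_dyadic_fractions)
    show "P G0 G1"
      unfolding P_def using G0 G1 by simp
    show "\<exists>W. P U W \<and> P W V" if "P U V" for U V
    proof -
      have V: "openin Y V" "R\<inverse> `` V \<subseteq> V" and UV: "Y closure_of U \<subseteq> V"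
        using that unfolding P_def by simp_all
      have "R\<inverse> `` (Y closure_of U) \<subseteq> R\<inverse> `` V"
        using UV by (rule Image_mono[OF order_refl])
      with V(2) have "R\<inverse> `` (Y closure_of U) \<subseteq> V"
        by (rule order_trans[rotated])
      then obtain W where "openin Y W" "R\<inverse> `` W \<subseteq> W" "Y closure_of U \<subseteq> W" "Y closure_of W \<subseteq> V"
        by (rule decreasing_open_between[OF closedin_closure_of V(1)])
      with that V have "P U W \<and> P W V"
        unfolding P_def by simp
      then show ?thesis ..
    qed
    show "P U W" if "P U V" "P V W" for U V W
      using that unfolding P_def by (meson closure_of_subset openin_subset subset_trans)
  qed
  then obtain G :: "real \<Rightarrow> 'a set" where G0_eq: "G 0 = G0" and G1_eq: "G 1 = G1"
    and chain_ball: "\<forall>r \<in> dyadics \<inter> {0..1}. \<forall>s \<in> dyadics \<inter> {0..1}. r < s \<longrightarrow> P (G r) (G s)"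
    by blast
  have chain: "P (G r) (G s)" if "r \<in> dyadics \<inter> {0..1}" "s \<in> dyadics \<inter> {0..1}" "r < s" for r s
    using chain_ball that by blast
  have one: "1 \<in> dyadics \<inter> {0..1::real}"
    using real_in_dyadics[of 1] by simp
  have G_props: "openin Y (G r) \<and> R\<inverse> `` G r \<subseteq> G r" if "r \<in> dyadics \<inter> {0..1}" for r
  proof (cases "r = 1")
    case True
    then show ?thesis
      using G1 G1_eq by simp
  next
    case False
    then show ?thesis
      using chain[OF that one] that unfolding P_def by simp
  qed
  have open_G: "openin Y (G r)" if "r \<in> dyadics \<inter> {0..1}" for r
    using G_props[OF that] by simp
  have closure_G: "Y closure_of G r \<subseteq> G s"
    if "r \<in> dyadics \<inter> {0..1}" "s \<in> dyadics \<inter> {0..1}" "r < s" for r s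
    using chain[OF that] unfolding P_def by simp
  show thesis
  proof
    show "continuous_map Y (top_of_set {0..1}) (dyadic_urysohn_fun G)"
      using open_G closure_G by (rule continuous_map_dyadic_urysohn_fun)
    show "dyadic_urysohn_fun G x \<le> dyadic_urysohn_fun G y" if "(x, y) \<in> R" for x y
      using G_props that by (intro dyadic_urysohn_fun_mono) blast
    have "p \<notin> G 1"
      using \<open>p \<notin> G1\<close> G1_eq by simp
    with open_G closure_G one have "1 \<le> dyadic_urysohn_fun G p"
      by (rule dyadic_urysohn_fun_ge)
    then show "dyadic_urysohn_fun G p = 1"
      using dyadic_urysohn_fun_le_1 by (rule order_antisym[rotated])
    have "dyadic_urysohn_fun G q \<le> 0"
      using G0(3) G0_eq real_in_dyadics[of 0] by (intro dyadic_urysohn_fun_le) simp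
    then show "dyadic_urysohn_fun G q = 0"
      using dyadic_urysohn_fun_nonneg by (rule order_antisym)
  qed
qed

end

lemma preorder_on_Inter_Gf:
  "preorder_on (topspace Y) (topspace Y \<times> topspace Y \<inter> (\<Inter>i\<in>I. Gf Y (h i)))"
  unfolding preorder_on_def refl_on_def trans_def Gf_def by (fastforce intro: order_trans)

lemma closedin_Gf:
  assumes "continuous_map Y euclideanreal h"
  shows "closedin (prod_topology Y Y) (Gf Y h)"
proof -
  have "continuous_map (prod_topology Y Y) euclideanreal (\<lambda>z. h (snd z) - h (fst z))"
    using continuous_map_compose[OF continuous_map_fst assms]
      continuous_map_compose[OF continuous_map_snd assms]
    by (intro continuous_map_diff) (simp_all add: o_def)
  then have "closedin (prod_topology Y Y) {z \<in> topspace (prod_topology Y Y). h (snd z) - h (fst z) \<in> {0..}}"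
    by (rule closedin_continuous_map_preimage) simp
  moreover have "{z \<in> topspace (prod_topology Y Y). h (snd z) - h (fst z) \<in> {0..}} = Gf Y h"
    unfolding Gf_def by auto
  ultimately show ?thesis
    by simp
qed

lemma closedin_Inter_Gf:
  assumes "\<And>i. i \<in> I \<Longrightarrow> continuous_map Y euclideanreal (h i)"
  shows "closedin (prod_topology Y Y) (topspace Y \<times> topspace Y \<inter> (\<Inter>i\<in>I. Gf Y (h i)))"
proof -
  have "topspace Y \<times> topspace Y \<inter> (\<Inter>i\<in>I. Gf Y (h i))
        = \<Inter>(insert (topspace Y \<times> topspace Y) ((\<lambda>i. Gf Y (h i)) ` I))"
    by blast
  also have "closedin (prod_topology Y Y) \<dots>"
    using assms closedin_Gf closedin_topspace[of "prod_topology Y Y"] by (intro closedin_Inter) auto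
  finally show ?thesis .
qed

context
  fixes X :: "'a topology" and Y :: "'b topology" and b :: "'a \<Rightarrow> 'b"
  assumes sc: "stone_cech X Y b"
begin

lemma stone_cech_compact_Hausdorff: "compact_space Y" "Hausdorff_space Y"
  using sc unfolding stone_cech_def by simp_all

lemma continuous_map_stone_cech: "continuous_map X Y b"
  using sc unfolding stone_cech_def embedding_map_def
  by (metis continuous_map_in_subtopology homeomorphic_imp_continuous_map)

lemma sc_ext_props:
  assumes "continuous_map X (top_of_set {0..1}) f"
  shows "continuous_map Y (top_of_set {0..1}) (sc_ext X Y b f) \<and> (\<forall>x\<in>topspace X. sc_ext X Y b f (b x) = f x)"
proof -
  have "\<exists>!h. continuous_map Y (top_of_set {0..1}) h \<and> (\<forall>x\<in>topspace X. h (b x) = f x)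
            \<and> (\<forall>y. y \<notin> topspace Y \<longrightarrow> h y = 0)"
    using sc assms unfolding stone_cech_def by blast
  from theI'[OF this] show ?thesis
    unfolding sc_ext_def by blast
qed

lemma continuous_map_sc_ext:
  "continuous_map X (top_of_set {0..1}) f \<Longrightarrow> continuous_map Y (top_of_set {0..1}) (sc_ext X Y b f)"
  using sc_ext_props by blast

lemma sc_ext_extends:
  "\<lbrakk>continuous_map X (top_of_set {0..1}) f; x \<in> topspace X\<rbrakk> \<Longrightarrow> sc_ext X Y b f (b x) = f x"
  using sc_ext_props by blast

lemma sc_ext_compose:
  assumes h: "continuous_map Y (top_of_set {0..1}) h" and y: "y \<in> topspace Y"
  shows "sc_ext X Y b (h \<circ> b) y = h y"
proof -
  define h' where "h' y = (if y \<in> topspace Y then h y else 0)" for y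
  have h': "continuous_map Y (top_of_set {0..1}) h'"
    using h by (rule continuous_map_eq) (simp add: h'_def)
  have hb: "continuous_map X (top_of_set {0..1}) (h \<circ> b)"
    using continuous_map_compose[OF continuous_map_stone_cech h] .
  have "\<exists>!k. continuous_map Y (top_of_set {0..1}) k \<and> (\<forall>x\<in>topspace X. k (b x) = (h \<circ> b) x)
            \<and> (\<forall>y. y \<notin> topspace Y \<longrightarrow> k y = 0)"
    using sc hb unfolding stone_cech_def by blast
  moreover have "\<forall>x\<in>topspace X. h' (b x) = (h \<circ> b) x"
    using continuous_map_image_subset_topspace[OF continuous_map_stone_cech] by (auto simp: h'_def)
  ultimately have "sc_ext X Y b (h \<circ> b) = h'"
    unfolding sc_ext_def using h' by (intro the1_equality) (auto simp: h'_def)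
  then show ?thesis
    using y by (simp add: h'_def)
qed

lemma beta_graph_on_image:
  assumes "x \<in> topspace X" "y \<in> topspace X"
  shows "(b x, b y) \<in> beta_graph X le Y b \<longleftrightarrow> (\<forall>f \<in> iso_cont_01 X le. f x \<le> f y)"
proof -
  have "b x \<in> topspace Y" "b y \<in> topspace Y"
    using assms continuous_map_image_subset_topspace[OF continuous_map_stone_cech] by auto
  moreover have "sc_ext X Y b f (b x) = f x" "sc_ext X Y b f (b y) = f y" if "f \<in> iso_cont_01 X le" for f
    using that assms sc_ext_extends unfolding iso_cont_01_def by auto
  ultimately show ?thesis
    unfolding beta_graph_def Gf_def by auto
qed

lemma beta_graph_minimal:
  assumes R: "compact_preordered_space Y R"
    and le_R: "\<And>x y. \<lbrakk>x \<in> topspace X; y \<in> topspace X; le x y\<rbrakk> \<Longrightarrow> (b x, b y) \<in> R"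
  shows "beta_graph X le Y b \<subseteq> R"
proof (rule subrelI, rule ccontr)
  fix p q assume pq: "(p, q) \<in> beta_graph X le Y b" "(p, q) \<notin> R"
  have "p \<in> topspace Y" "q \<in> topspace Y"
    using pq(1) unfolding beta_graph_def by auto
  with pq(2) obtain g :: "'b \<Rightarrow> real" where g: "continuous_map Y (top_of_set {0..1}) g"
    "\<And>x y. (x, y) \<in> R \<Longrightarrow> g x \<le> g y" "g p = 1" "g q = 0"
    by (metis compact_preordered_space.monotone_Urysohn[OF R])
  have "g \<circ> b \<in> iso_cont_01 X le"
    unfolding iso_cont_01_def
    using continuous_map_compose[OF continuous_map_stone_cech g(1)] g(2) le_R by auto
  then have "(p, q) \<in> Gf Y (sc_ext X Y b (g \<circ> b))"
    using pq(1) unfolding beta_graph_def by blast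
  then have "g p \<le> g q"
    unfolding Gf_def using sc_ext_compose[OF g(1)] by auto
  with g show False
    by simp
qed

end

theorem mainTheorem6:
  fixes X :: "'a topology" and le :: "'a \<Rightarrow> 'a \<Rightarrow> bool"
    and Y :: "'b topology" and b :: "'a \<Rightarrow> 'b"
  assumes tych: "completely_regular_space X" "Hausdorff_space X"
    and preord: "preorder_on (topspace X) (pgraph X le)"
    and T2pre: "closedin (prod_topology X X) (pgraph X le)"
    and sep: "pgraph X le = topspace X \<times> topspace X \<inter> (\<Inter>f\<in>iso_cont_01 X le. Gf X f)"
    and sc: "stone_cech X Y b"
  shows "preorder_on (topspace Y) (beta_graph X le Y b)
    \<and> closedin (prod_topology Y Y) (beta_graph X le Y b)
    \<and> {(x, y). x \<in> topspace X \<and> y \<in> topspace X \<and> (b x, b y) \<in> beta_graph X le Y b} = pgraph X le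
    \<and> (\<forall>R. preorder_on (topspace Y) R \<and> closedin (prod_topology Y Y) R \<and>
          {(x, y). x \<in> topspace X \<and> y \<in> topspace X \<and> (b x, b y) \<in> R} = pgraph X le
          \<longrightarrow> beta_graph X le Y b \<subseteq> R)"
proof (intro conjI allI impI)
  show "preorder_on (topspace Y) (beta_graph X le Y b)"
    unfolding beta_graph_def by (rule preorder_on_Inter_Gf)
  show "closedin (prod_topology Y Y) (beta_graph X le Y b)"
    unfolding beta_graph_def using continuous_map_sc_ext[OF sc]
    by (intro closedin_Inter_Gf) (auto simp: iso_cont_01_def continuous_map_in_subtopology)
  show "{(x, y). x \<in> topspace X \<and> y \<in> topspace X \<and> (b x, b y) \<in> beta_graph X le Y b} = pgraph X le"
    unfolding sep using beta_graph_on_image[OF sc] by (auto simp: Gf_def)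
  fix R
  assume hR: "preorder_on (topspace Y) R \<and> closedin (prod_topology Y Y) R \<and>
          {(x, y). x \<in> topspace X \<and> y \<in> topspace X \<and> (b x, b y) \<in> R} = pgraph X le"
  show "beta_graph X le Y b \<subseteq> R"
  proof (rule beta_graph_minimal[OF sc])
    show "compact_preordered_space Y R"
      using hR stone_cech_compact_Hausdorff[OF sc] by unfold_locales auto
    show "(b x, b y) \<in> R" if "x \<in> topspace X" "y \<in> topspace X" "le x y" for x y
      using hR that unfolding pgraph_def by blast
  qed
qed

end
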